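(* For every $n\ge1$ and every $r\in\mathbb{N}\cup\{0\}$, every polynomial function $C_0\times\cdots\times C_r\to\mathbb{R}$ that is invariant under the natural action of $\mathrm{Gl}_n$ is constant.
   Context: $V=T_xX$ is an $n$-dimensional real vector space and $\mathrm{Gl}_n=\mathrm{Gl}(V)$. For $m\ge0$, $C_m\subseteq V\otimes(V^* )^{\otimes(m+2)}$ is the space of $(1,m+2)$-tensors $T^l_{ijk_1\dots k_m}$ symmetric in $k_1,\dots,k_m$ and whose symmetrization over all $m+2$ covariant indices vanishes; $\mathrm{Gl}_n$ acts on it by the standard tensorial action. *)

theory Defs
  imports "HOL-Analysis.Analysis" "HOL-Combinatorics.Permutations"
begin

text \<open>V = real^'n (n = CARD('n) \<ge> 1). A (1,m+2)-tensor is a function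
  T :: 'n \<Rightarrow> 'n list \<Rightarrow> real, T l [i,j,k1,...,km] = T^l_{ijk1...km},
  required to vanish on index lists of length other than m+2.\<close>

type_synonym 'n tensor = "'n \<Rightarrow> 'n list \<Rightarrow> real"

definition C_space :: "nat \<Rightarrow> ('n::finite) tensor set" where
  "C_space m = {T.
     (\<forall>l xs. length xs \<noteq> m + 2 \<longrightarrow> T l xs = 0) \<and>
     (\<forall>l i j ks \<sigma>. length ks = m \<and> \<sigma> permutes {..<m} \<longrightarrow>
        T l (i # j # permute_list \<sigma> ks) = T l (i # j # ks)) \<and>
     (\<forall>l xs. length xs = m + 2 \<longrightarrow>
        (\<Sum>\<sigma>\<in>{\<sigma>. \<sigma> permutes {..<m + 2}}. T l (permute_list \<sigma> xs)) = 0)}"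

definition tensor_act :: "nat \<Rightarrow> real^'n^'n \<Rightarrow> ('n::finite) tensor \<Rightarrow> 'n tensor" where
  "tensor_act m g T = (\<lambda>l xs.
     if length xs = m + 2 then
       (\<Sum>a\<in>UNIV. \<Sum>ys\<in>{ys. length ys = m + 2}.
          g $ l $ a * (\<Prod>p<m + 2. matrix_inv g $ (ys ! p) $ (xs ! p)) * T a ys)
     else 0)"

definition C_prod :: "nat \<Rightarrow> (nat \<Rightarrow> ('n::finite) tensor) set" where
  "C_prod r = {Ts. (\<forall>m\<le>r. Ts m \<in> C_space m) \<and> (\<forall>m>r. Ts m = (\<lambda>_ _. 0))}"

inductive coord_poly :: "nat \<Rightarrow> ((nat \<Rightarrow> ('n::finite) tensor) \<Rightarrow> real) \<Rightarrow> bool" for r where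
  const: "coord_poly r (\<lambda>_. c)"
| coord: "m \<le> r \<Longrightarrow> length xs = m + 2 \<Longrightarrow> coord_poly r (\<lambda>Ts. Ts m l xs)"
| add: "coord_poly r P \<Longrightarrow> coord_poly r Q \<Longrightarrow> coord_poly r (\<lambda>Ts. P Ts + Q Ts)"
| mult: "coord_poly r P \<Longrightarrow> coord_poly r Q \<Longrightarrow> coord_poly r (\<lambda>Ts. P Ts * Q Ts)"

definition polynomial_on_C_prod :: "nat \<Rightarrow> ((nat \<Rightarrow> ('n::finite) tensor) \<Rightarrow> real) \<Rightarrow> bool" where
  "polynomial_on_C_prod r F \<longleftrightarrow> (\<exists>P. coord_poly r P \<and> (\<forall>Ts\<in>C_prod r. F Ts = P Ts))"

definition Gl_invariant :: "nat \<Rightarrow> ((nat \<Rightarrow> ('n::finite) tensor) \<Rightarrow> real) \<Rightarrow> bool" where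
  "Gl_invariant r F \<longleftrightarrow> (\<forall>g::real^'n^'n. invertible g \<longrightarrow>
      (\<forall>Ts\<in>C_prod r. F (\<lambda>m. tensor_act m g (Ts m)) = F Ts))"

end

theory Submission
  imports Defs
begin

text \<open>The scalar matrix \<open>s\<^sup>-\<^sup>1 I\<close> acts on \<open>C\<^sub>m\<close> as multiplication by \<open>s\<^sup>m\<^sup>+\<^sup>1\<close>, the
  number of covariant minus contravariant indices. An invariant polynomial \<open>F\<close> is therefore
  constant along the curve \<open>s \<mapsto> (s T\<^sub>0, s\<^sup>2 T\<^sub>1, \<dots>, s\<^sup>r\<^sup>+\<^sup>1 T\<^sub>r)\<close> for \<open>s \<noteq> 0\<close>, and by
  continuity at \<open>s = 0\<close> its value equals \<open>F 0\<close>.\<close>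

lemma mat_eq_scaleR_mat_1: "(mat t :: real^'n^'n) = t *\<^sub>R mat 1"
  by (simp add: vec_eq_iff mat_def)

lemma mat_matrix_mult: "(mat t :: real^'n^'n) ** A = t *\<^sub>R A"
  by (simp add: mat_eq_scaleR_mat_1[of t] scalar_matrix_assoc[symmetric])

lemma mat_mult_mat: "(mat s :: real^'n^'n) ** mat t = mat (s * t)"
  unfolding mat_matrix_mult by (simp add: vec_eq_iff mat_def)

lemma matrix_inv_mat:
  assumes "t \<noteq> 0"
  shows "matrix_inv (mat t :: real^'n^'n) = mat (1/t)"
proof -
  have "\<exists>B. mat t ** B = mat 1 \<and> B ** mat t = (mat 1 :: real^'n^'n)"
    using assms by (intro exI[of _ "mat (1/t)"]) (simp add: mat_mult_mat)
  then have "mat t ** matrix_inv (mat t :: real^'n^'n) = mat 1"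
    unfolding matrix_inv_def by (rule conjunct1[OF someI_ex])
  then have "(1/t) *\<^sub>R (t *\<^sub>R matrix_inv (mat t :: real^'n^'n)) = (1/t) *\<^sub>R mat 1"
    by (simp add: mat_matrix_mult)
  then show ?thesis
    using assms by (simp add: mat_eq_scaleR_mat_1[of "1/t"])
qed

lemma sum_mat_row: "(\<Sum>a\<in>UNIV. (mat t :: real^'n^'n) $ l $ a * f a) = t * f l"
  by (simp add: mat_def if_distrib[of "\<lambda>x. x * _"] cong: if_cong)

lemma prod_mat_nth_lists:
  assumes "length ys = k" and "length xs = k"
  shows "(\<Prod>p<k. (mat c :: real^'n^'n) $ (ys ! p) $ (xs ! p)) = (if ys = xs then c ^ k else 0)"
proof (cases "ys = xs")
  case False
  then obtain p where "p < k" "ys ! p \<noteq> xs ! p"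
    using assms nth_equalityI by metis
  then show ?thesis
    using False by (intro trans[OF prod_zero]) (auto simp: mat_def)
qed (simp add: mat_def)

lemma tensor_act_mat:
  fixes T :: "'n::finite tensor"
  assumes "t \<noteq> 0" and "\<forall>l xs. length xs \<noteq> m + 2 \<longrightarrow> T l xs = 0"
  shows "tensor_act m (mat t) T = (\<lambda>l xs. (1/t) ^ (m + 1) * T l xs)"
proof (intro ext)
  fix l and xs :: "'n list"
  show "tensor_act m (mat t) T l xs = (1/t) ^ (m + 1) * T l xs"
  proof (cases "length xs = m + 2")
    case True
    have prod: "(\<Prod>p<m + 2. mat (1/t) $ (ys ! p) $ (xs ! p)) = (if ys = xs then (1/t) ^ (m + 2) else 0)"
      if "ys \<in> {ys. length ys = m + 2}" for ys
      using prod_mat_nth_lists that True by blast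
    have "tensor_act m (mat t) T l xs = (\<Sum>a\<in>UNIV. \<Sum>ys\<in>{ys. length ys = m + 2}.
        mat t $ l $ a * (if ys = xs then (1/t) ^ (m + 2) else 0) * T a ys)"
      unfolding tensor_act_def matrix_inv_mat[OF assms(1)] if_P[OF True]
      by (intro sum.cong refl) (simp only: prod)
    also have "\<dots> = (\<Sum>a\<in>UNIV. mat t $ l $ a * (1/t) ^ (m + 2) * T a xs)"
      using True finite_lists_length_eq[of "UNIV :: 'n set" "m + 2"]
      by (simp add: if_distrib[of "\<lambda>x. _ * x * _"] sum.delta' cong: if_cong)
    also have "\<dots> = (1/t) ^ (m + 1) * T l xs"
      using assms(1) unfolding mult.assoc sum_mat_row by (simp add: field_simps)
    finally show ?thesis .
  qed (use assms(2) in \<open>simp add: tensor_act_def\<close>)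
qed

definition dilate :: "real \<Rightarrow> (nat \<Rightarrow> 'n tensor) \<Rightarrow> (nat \<Rightarrow> 'n tensor)" where
  "dilate s Ts = (\<lambda>m l xs. s ^ (m + 1) * Ts m l xs)"

lemma dilate_in_C_prod: "Ts \<in> C_prod r \<Longrightarrow> dilate s Ts \<in> C_prod r"
  unfolding C_prod_def C_space_def dilate_def by (auto simp: sum_distrib_left[symmetric])

lemma tensor_act_mat_C_prod:
  assumes "s \<noteq> 0" and "Ts \<in> C_prod r"
  shows "(\<lambda>m. tensor_act m (mat (1/s)) (Ts m)) = dilate s Ts"
proof
  fix m
  have "\<forall>l xs. length xs \<noteq> m + 2 \<longrightarrow> Ts m l xs = 0"
    using assms(2) by (cases "m \<le> r") (auto simp: C_prod_def C_space_def)
  then show "tensor_act m (mat (1/s)) (Ts m) = dilate s Ts m"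
    using assms(1) by (simp add: tensor_act_mat dilate_def)
qed

lemma Gl_invariant_dilate:
  assumes "Gl_invariant r F" and "Ts \<in> C_prod r" and "s \<noteq> 0"
  shows "F (dilate s Ts) = F Ts"
proof -
  have "invertible (mat (1/s) :: real^'n^'n)"
    using assms(3) unfolding invertible_def
    by (intro exI[of _ "mat s"]) (simp add: mat_mult_mat)
  then show ?thesis
    using assms unfolding Gl_invariant_def by (metis tensor_act_mat_C_prod)
qed

lemma coord_poly_continuous_on:
  assumes "coord_poly r P" and "\<And>m l xs. continuous_on S (\<lambda>s. \<Phi> s m l xs)"
  shows "continuous_on S (\<lambda>s. P (\<Phi> s))"
  using assms(1) by induction (auto intro!: continuous_intros assms(2))

lemma continuous_eq_const_punctured:
  fixes f :: "'a::{perfect_space,t2_space} \<Rightarrow> 'b::t2_space"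
  assumes "isCont f a" and "\<And>x. x \<noteq> a \<Longrightarrow> f x = c"
  shows "f a = c"
proof -
  have "(f \<longlongrightarrow> c) (at a)"
    using assms(2) by (intro tendsto_eventually) (auto simp: eventually_at_filter)
  moreover have "(f \<longlongrightarrow> f a) (at a)"
    using assms(1) by (simp add: isCont_def)
  ultimately show ?thesis
    by (rule tendsto_unique[OF trivial_limit_at, symmetric])
qed

theorem mainTheorem8:
  fixes r :: nat and F :: "(nat \<Rightarrow> ('n::finite) tensor) \<Rightarrow> real"
  assumes "polynomial_on_C_prod r F"
    and "Gl_invariant r F"
  shows "\<exists>c. \<forall>Ts\<in>C_prod r. F Ts = c"
proof -
  obtain P where P: "coord_poly r P" and FP: "\<forall>Ts\<in>C_prod r. F Ts = P Ts"
    using assms(1) unfolding polynomial_on_C_prod_def by blast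
  have "F Ts = P (dilate 0 Ts)" if Ts: "Ts \<in> C_prod r" for Ts
  proof (rule sym, rule continuous_eq_const_punctured[where f = "\<lambda>s. P (dilate s Ts)"])
    show "isCont (\<lambda>s. P (dilate s Ts)) 0"
      using coord_poly_continuous_on[OF P, of UNIV "\<lambda>s. dilate s Ts"]
      by (simp add: dilate_def continuous_on_eq_continuous_at continuous_intros)
    show "P (dilate s Ts) = F Ts" if "s \<noteq> 0" for s
      using FP dilate_in_C_prod[OF Ts] Gl_invariant_dilate[OF assms(2) Ts that] by simp
  qed
  moreover have "dilate 0 Ts = (\<lambda>_ _ _. 0)" for Ts :: "nat \<Rightarrow> 'n tensor"
    by (simp add: dilate_def)
  ultimately show ?thesis by auto
qed

end
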